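(* Let $\Omega\subset\mathbb{R}^N$ be a bounded strictly convex domain having an interior tangent ball at every point of $\partial\Omega$. Let $\mu_1>0$ and $\psi_1\in C(\overline\Omega)$ with $\psi_1>0$ in $\Omega$, $\psi_1=0$ on $\partial\Omega$, $-\lambda_N(D^2\psi_1)=\mu_1\psi_1$ in $\Omega$ (viscosity sense), and let $\varphi_1\in C(\overline\Omega)$ with $\varphi_1<0$ in $\Omega$, $\varphi_1=0$ on $\partial\Omega$, $-\lambda_1(D^2\varphi_1)=\mu_1\varphi_1$ in $\Omega$; assume $\|\psi_1\|_\infty=\|\varphi_1\|_\infty=1$. Then there exists $C>0$ such that for all $x\in\Omega$, \[ \psi_1(x)\ge C\operatorname{dist}(x,\partial\Omega)\quad\text{and}\quad \varphi_1(x)\le -C\operatorname{dist}(x,\partial\Omega). \]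
   Context: $\lambda_1(A)$ and $\lambda_N(A)$ are the smallest and largest eigenvalues of a symmetric matrix $A$. The equations are understood in the viscosity sense. *)

theory Defs
  imports "HOL-Analysis.Analysis"
begin

definition eigenvalues :: "real^'n^'n \<Rightarrow> real set" where
  "eigenvalues A = {c. \<exists>v. v \<noteq> 0 \<and> A *v v = c *\<^sub>R v}"

definition lambda_min :: "real^'n^'n \<Rightarrow> real" where
  "lambda_min A = Inf (eigenvalues A)"

definition lambda_max :: "real^'n^'n \<Rightarrow> real" where
  "lambda_max A = Sup (eigenvalues A)"

definition C2_hess :: "(real^'n \<Rightarrow> real) \<Rightarrow> real^'n \<Rightarrow> real^'n^'n \<Rightarrow> bool" where
  "C2_hess phi x0 X \<longleftrightarrow>
     (\<exists>e>0. \<exists>g H. X = H x0 \<and> continuous_on (ball x0 e) H \<and>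
        (\<forall>x\<in>ball x0 e. (phi has_derivative (\<lambda>h. g x \<bullet> h)) (at x) \<and>
                        (g has_derivative (\<lambda>h. H x *v h)) (at x)))"

(* Viscosity solution of  F(D^2 u, u) = 0 in Omega, with F(X,r) = -lam X - mu r
   (degenerate elliptic when lam is monotone). *)
definition visc_sub :: "(real^'n^'n \<Rightarrow> real) \<Rightarrow> real \<Rightarrow> (real^'n) set \<Rightarrow> (real^'n \<Rightarrow> real) \<Rightarrow> bool" where
  "visc_sub lam mu \<Omega> u \<longleftrightarrow>
     (\<forall>x0\<in>\<Omega>. \<forall>phi X. C2_hess phi x0 X \<longrightarrow>
        (\<exists>r>0. \<forall>x\<in>ball x0 r \<inter> \<Omega>. u x - phi x \<le> u x0 - phi x0) \<longrightarrow>
        - lam X \<le> mu * u x0)"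

definition visc_super :: "(real^'n^'n \<Rightarrow> real) \<Rightarrow> real \<Rightarrow> (real^'n) set \<Rightarrow> (real^'n \<Rightarrow> real) \<Rightarrow> bool" where
  "visc_super lam mu \<Omega> u \<longleftrightarrow>
     (\<forall>x0\<in>\<Omega>. \<forall>phi X. C2_hess phi x0 X \<longrightarrow>
        (\<exists>r>0. \<forall>x\<in>ball x0 r \<inter> \<Omega>. u x - phi x \<ge> u x0 - phi x0) \<longrightarrow>
        - lam X \<ge> mu * u x0)"

definition visc_sol :: "(real^'n^'n \<Rightarrow> real) \<Rightarrow> real \<Rightarrow> (real^'n) set \<Rightarrow> (real^'n \<Rightarrow> real) \<Rightarrow> bool" where
  "visc_sol lam mu \<Omega> u \<longleftrightarrow> continuous_on \<Omega> u \<and> visc_sub lam mu \<Omega> u \<and> visc_super lam mu \<Omega> u"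

definition strictly_convex_dom :: "(real^'n) set \<Rightarrow> bool" where
  "strictly_convex_dom \<Omega> \<longleftrightarrow>
     (\<forall>x\<in>closure \<Omega>. \<forall>y\<in>closure \<Omega>. x \<noteq> y \<longrightarrow> open_segment x y \<subseteq> \<Omega>)"

definition interior_ball_condition :: "(real^'n) set \<Rightarrow> bool" where
  "interior_ball_condition \<Omega> \<longleftrightarrow>
     (\<forall>y\<in>frontier \<Omega>. \<exists>z r. r > 0 \<and> ball z r \<subseteq> \<Omega> \<and> dist z y = r)"

end

theory Submission
  imports Defs
begin

text \<open>
  A viscosity supersolution of \<open>-\<lambda>\<^sub>N(D\<^sup>2u) = \<mu>u\<close> with \<open>\<mu>u > 0\<close> is concave. Were \<open>u\<close> below
  its chord somewhere on a segment \<open>[a, b]\<close>, subtract the chord and add \<open>K\<close> times the squared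
  distance to the line through \<open>a\<close> and \<open>b\<close>: on a thin closed cylinder around the segment this
  is negative at a point of the axis and, for large \<open>K\<close>, larger on the boundary, so it has an
  interior minimum. The test function touching \<open>u\<close> from below there has Hessian
  \<open>-2K (I - e e\<^sup>T)\<close>, whose largest eigenvalue is \<open>0\<close>, contradicting \<open>-\<lambda>\<^sub>N \<ge> \<mu>u > 0\<close>.
  Symmetrically \<open>\<phi>1\<close> is convex.

  If \<open>u \<ge> 0\<close> is concave with \<open>u x0 = 1\<close>, let \<open>y\<close> be the point where the ray from \<open>x0\<close>
  through \<open>x\<close> leaves \<open>\<Omega>\<close>; concavity gives
  \<open>u x \<ge> |y - x| / |y - x0| \<ge> dist(x, \<partial>\<Omega>) / diam \<Omega>\<close>.
\<close>

definition orth_proj_matrix :: "real^'n \<Rightarrow> real^'n^'n" where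
  "orth_proj_matrix e = mat 1 - (\<chi> i j. e$i * e$j)"

lemma orth_proj_matrix_mult: "orth_proj_matrix e *v h = h - (e \<bullet> h) *\<^sub>R e"
proof -
  have "(\<chi> i j. e$i * e$j) *v h = (e \<bullet> h) *\<^sub>R e"
    by (simp add: vec_eq_iff matrix_vector_mult_def inner_vec_def sum_distrib_left
        mult.commute mult.left_commute)
  then show ?thesis by (simp add: orth_proj_matrix_def matrix_vector_mult_diff_rdistrib)
qed

lemma scaled_orth_proj_matrix_mult:
  "(k *\<^sub>R orth_proj_matrix e) *v h = k *\<^sub>R (h - (e \<bullet> h) *\<^sub>R e)"
  by (simp add: orth_proj_matrix_mult flip: scaleR_matrix_vector_assoc)

lemma eigenvalues_scaled_orth_proj_subset:
  assumes "norm e = 1"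
  shows "eigenvalues (k *\<^sub>R orth_proj_matrix e) \<subseteq> {0, k}"
proof
  fix c assume "c \<in> eigenvalues (k *\<^sub>R orth_proj_matrix e)"
  then obtain v where v: "v \<noteq> 0" "k *\<^sub>R (v - (e \<bullet> v) *\<^sub>R e) = c *\<^sub>R v"
    by (auto simp: eigenvalues_def scaled_orth_proj_matrix_mult)
  have "c * (e \<bullet> v) = 0"
    using arg_cong[OF v(2), of "inner e"] assms by (simp add: inner_diff_right dot_square_norm)
  moreover have "e \<bullet> v = 0 \<Longrightarrow> c = k" using v by simp
  ultimately show "c \<in> {0, k}" by auto
qed

lemma zero_in_eigenvalues_scaled_orth_proj:
  assumes "norm e = 1"
  shows "0 \<in> eigenvalues (k *\<^sub>R orth_proj_matrix e)"
proof -
  have "k *\<^sub>R orth_proj_matrix e *v e = 0 *\<^sub>R e"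
    using assms by (simp add: scaled_orth_proj_matrix_mult dot_square_norm)
  moreover have "e \<noteq> 0" using assms by auto
  ultimately show ?thesis unfolding eigenvalues_def by blast
qed

lemma lambda_max_scaled_orth_proj_nonneg:
  assumes "norm e = 1"
  shows "0 \<le> lambda_max (k *\<^sub>R orth_proj_matrix e)"
proof -
  have "bdd_above (eigenvalues (k *\<^sub>R orth_proj_matrix e))"
    by (rule bdd_above_mono[OF _ eigenvalues_scaled_orth_proj_subset[OF assms]]) simp
  then show ?thesis
    unfolding lambda_max_def by (rule cSup_upper[OF zero_in_eigenvalues_scaled_orth_proj[OF assms]])
qed

lemma lambda_min_scaled_orth_proj_nonpos:
  assumes "norm e = 1"
  shows "lambda_min (k *\<^sub>R orth_proj_matrix e) \<le> 0"
proof -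
  have "bdd_below (eigenvalues (k *\<^sub>R orth_proj_matrix e))"
    by (rule bdd_below_mono[OF _ eigenvalues_scaled_orth_proj_subset[OF assms]]) simp
  then show ?thesis
    unfolding lambda_min_def by (rule cInf_lower[OF zero_in_eigenvalues_scaled_orth_proj[OF assms]])
qed

definition sqdist_to_line :: "real^'n \<Rightarrow> real^'n \<Rightarrow> real^'n \<Rightarrow> real" where
  "sqdist_to_line a e x = (x - a) \<bullet> (x - a) - ((x - a) \<bullet> e)^2"

lemma sqdist_to_line_eq_dist_foot:
  assumes "norm e = 1"
  shows "sqdist_to_line a e x = (dist (a + ((x - a) \<bullet> e) *\<^sub>R e) x)^2"
proof -
  have "e \<bullet> e = 1" using assms by (simp add: dot_square_norm)
  then show ?thesis
    unfolding sqdist_to_line_def dist_norm power2_norm_eq_inner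
    by (simp add: inner_diff_left inner_diff_right inner_commute algebra_simps power2_eq_square)
qed

definition ridge_test :: "real^'n \<Rightarrow> real^'n \<Rightarrow> real \<Rightarrow> real \<Rightarrow> real \<Rightarrow> real^'n \<Rightarrow> real" where
  "ridge_test a e c s K x = c + s * ((x - a) \<bullet> e) - K * sqdist_to_line a e x"

lemma C2_hess_ridge_test:
  "C2_hess (ridge_test a e c s K) x0 ((-2*K) *\<^sub>R orth_proj_matrix e)"
  unfolding C2_hess_def
proof (intro exI[of _ 1] conjI exI[of _ "\<lambda>x. s *\<^sub>R e - (2*K) *\<^sub>R ((x - a) - ((x - a) \<bullet> e) *\<^sub>R e)"]
    exI[of _ "\<lambda>x. (-2*K) *\<^sub>R orth_proj_matrix e"] ballI)
  fix x
  show "(ridge_test a e c s K has_derivative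
          (\<lambda>h. (s *\<^sub>R e - (2*K) *\<^sub>R ((x - a) - ((x - a) \<bullet> e) *\<^sub>R e)) \<bullet> h)) (at x)"
    unfolding ridge_test_def sqdist_to_line_def
    by (auto intro!: derivative_eq_intros
        simp: inner_diff_left inner_diff_right inner_commute algebra_simps power2_eq_square)
  show "((\<lambda>x. s *\<^sub>R e - (2*K) *\<^sub>R ((x - a) - ((x - a) \<bullet> e) *\<^sub>R e)) has_derivative
          (\<lambda>h. (-2*K) *\<^sub>R orth_proj_matrix e *v h)) (at x)"
    unfolding scaled_orth_proj_matrix_mult
    by (auto intro!: derivative_eq_intros simp: inner_commute algebra_simps)
qed simp_all

lemma visc_super_lambda_max_no_ridge_touch_below:
  assumes "visc_super lambda_max \<mu> \<Omega> u" "x0 \<in> \<Omega>" "0 < \<mu> * u x0" "norm e = 1"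
  shows "\<not> (\<exists>r>0. \<forall>x\<in>ball x0 r \<inter> \<Omega>. u x - ridge_test a e c s K x \<ge> u x0 - ridge_test a e c s K x0)"
proof
  assume "\<exists>r>0. \<forall>x\<in>ball x0 r \<inter> \<Omega>. u x - ridge_test a e c s K x \<ge> u x0 - ridge_test a e c s K x0"
  then have "- lambda_max ((-2*K) *\<^sub>R orth_proj_matrix e) \<ge> \<mu> * u x0"
    using assms(1,2) C2_hess_ridge_test unfolding visc_super_def by blast
  then show False using assms(3) lambda_max_scaled_orth_proj_nonneg[OF assms(4), of "-2*K"] by linarith
qed

lemma visc_sub_lambda_min_no_ridge_touch_above:
  assumes "visc_sub lambda_min \<mu> \<Omega> u" "x0 \<in> \<Omega>" "\<mu> * u x0 < 0" "norm e = 1"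
  shows "\<not> (\<exists>r>0. \<forall>x\<in>ball x0 r \<inter> \<Omega>. u x - ridge_test a e c s K x \<le> u x0 - ridge_test a e c s K x0)"
proof
  assume "\<exists>r>0. \<forall>x\<in>ball x0 r \<inter> \<Omega>. u x - ridge_test a e c s K x \<le> u x0 - ridge_test a e c s K x0"
  then have "- lambda_min ((-2*K) *\<^sub>R orth_proj_matrix e) \<le> \<mu> * u x0"
    using assms(1,2) C2_hess_ridge_test unfolding visc_sub_def by blast
  then show False using assms(3) lambda_min_scaled_orth_proj_nonpos[OF assms(4), of "-2*K"] by linarith
qed

lemma ridge_test_uminus: "ridge_test a e (- c) (- s) (- K) x = - ridge_test a e c s K x"
  by (simp add: ridge_test_def)

definition cylinder :: "real^'n \<Rightarrow> real^'n \<Rightarrow> real \<Rightarrow> real \<Rightarrow> (real^'n) set" where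
  "cylinder a e L r = {x. 0 \<le> (x - a) \<bullet> e \<and> (x - a) \<bullet> e \<le> L \<and> sqdist_to_line a e x \<le> r^2}"

lemma compact_cylinder: "compact (cylinder a e L r)"
proof (rule compact_eq_bounded_closed[THEN iffD2], rule conjI)
  have "norm (x - a) \<le> sqrt (r^2 + L^2)" if "x \<in> cylinder a e L r" for x
  proof -
    have "((x - a) \<bullet> e)^2 \<le> L^2" using that unfolding cylinder_def by (simp add: power_mono)
    then have "(norm (x - a))^2 \<le> r^2 + L^2"
      using that unfolding cylinder_def sqdist_to_line_def power2_norm_eq_inner mem_Collect_eq by linarith
    then show ?thesis by (simp add: real_le_rsqrt)
  qed
  then have "cylinder a e L r \<subseteq> cball a (sqrt (r^2 + L^2))" by (auto simp: dist_norm norm_minus_commute)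
  then show "bounded (cylinder a e L r)" using bounded_subset bounded_cball by blast
  show "closed (cylinder a e L r)" unfolding cylinder_def sqdist_to_line_def
    by (intro closed_Collect_conj closed_Collect_le continuous_intros)
qed

lemma dist_foot_le_radius:
  assumes "norm e = 1" "0 \<le> r" "x \<in> cylinder a e L r"
  shows "dist (a + ((x - a) \<bullet> e) *\<^sub>R e) x \<le> r"
  using assms sqdist_to_line_eq_dist_foot[OF assms(1), of a x]
  unfolding cylinder_def by (auto intro: power2_le_imp_le)

lemma cylinder_subset:
  assumes "norm e = 1" "0 < L" "0 \<le> r" "r < \<epsilon>"
    and "(\<Union>p\<in>closed_segment a (a + L *\<^sub>R e). ball p \<epsilon>) \<subseteq> \<Omega>"
  shows "cylinder a e L r \<subseteq> \<Omega>"
proof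
  fix x assume x: "x \<in> cylinder a e L r"
  define \<theta> where "\<theta> = ((x - a) \<bullet> e) / L"
  have "0 \<le> \<theta>" "\<theta> \<le> 1" using x assms(2) unfolding \<theta>_def cylinder_def by auto
  moreover have "(1 - \<theta>) *\<^sub>R a + \<theta> *\<^sub>R (a + L *\<^sub>R e) = a + (\<theta> * L) *\<^sub>R e"
    by (simp add: algebra_simps)
  moreover have "\<theta> * L = (x - a) \<bullet> e" using assms(2) unfolding \<theta>_def by simp
  ultimately have "a + ((x - a) \<bullet> e) *\<^sub>R e \<in> closed_segment a (a + L *\<^sub>R e)"
    unfolding closed_segment_def by (metis (mono_tags, lifting) mem_Collect_eq)
  moreover have "x \<in> ball (a + ((x - a) \<bullet> e) *\<^sub>R e) \<epsilon>"
    using dist_foot_le_radius[OF assms(1,3) x] assms(4) by simp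
  ultimately show "x \<in> \<Omega>" using assms(5) by blast
qed

lemma cylinder_interior_local_min:
  fixes w :: "real^'n \<Rightarrow> real"
  assumes "continuous_on (cylinder a e L r) w" "p \<in> cylinder a e L r"
    and "\<And>x. x \<in> cylinder a e L r \<Longrightarrow> (x - a) \<bullet> e = 0 \<or> (x - a) \<bullet> e = L \<or> sqdist_to_line a e x = r^2
           \<Longrightarrow> w p < w x"
  obtains x0 \<delta> where "0 < \<delta>" "ball x0 \<delta> \<subseteq> cylinder a e L r" "\<And>x. x \<in> ball x0 \<delta> \<Longrightarrow> w x0 \<le> w x"
proof -
  obtain x0 where x0: "x0 \<in> cylinder a e L r" "\<And>x. x \<in> cylinder a e L r \<Longrightarrow> w x0 \<le> w x"
    using continuous_attains_inf[of "cylinder a e L r" w] compact_cylinder assms(1,2) by blast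
  define V where "V = {x. 0 < (x - a) \<bullet> e \<and> (x - a) \<bullet> e < L \<and> sqdist_to_line a e x < r^2}"
  have "open V" unfolding V_def sqdist_to_line_def
    by (intro open_Collect_conj open_Collect_less continuous_intros)
  moreover have "x0 \<in> V"
    using x0 assms(3)[of x0] x0(2)[OF assms(2)] unfolding V_def cylinder_def by force
  ultimately obtain \<delta> where "0 < \<delta>" "ball x0 \<delta> \<subseteq> V" using open_contains_ball by blast
  moreover have "V \<subseteq> cylinder a e L r" unfolding V_def cylinder_def by auto
  ultimately show ?thesis using that x0 by blast
qed

lemma penalized_interior_min_in_cylinder:
  fixes v :: "real^'n \<Rightarrow> real"
  assumes "norm e = 1" "0 < r" "continuous_on (cylinder a e L r) v"
    and p: "p \<in> cylinder a e L r" "sqdist_to_line a e p = 0"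
    and caps: "\<And>x. x \<in> cylinder a e L r \<Longrightarrow> (x - a) \<bullet> e = 0 \<or> (x - a) \<bullet> e = L \<Longrightarrow> v p < v x"
  obtains K \<delta> x0 where "0 < K" "0 < \<delta>" "ball x0 \<delta> \<subseteq> cylinder a e L r"
    "\<And>x. x \<in> ball x0 \<delta> \<Longrightarrow> v x0 + K * sqdist_to_line a e x0 \<le> v x + K * sqdist_to_line a e x"
proof -
  have "compact (v ` cylinder a e L r)" by (rule compact_continuous_image[OF assms(3) compact_cylinder])
  then obtain M where M: "\<And>x. x \<in> cylinder a e L r \<Longrightarrow> \<bar>v x\<bar> \<le> M"
    unfolding compact_eq_bounded_closed bounded_iff by auto
  have "0 \<le> M" using M[OF p(1)] by linarith
  \<comment> \<open>\<open>K r\<^sup>2 > 2M\<close> lifts \<open>w\<close> above \<open>v p\<close> on the lateral surface\<close>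
  define K where "K = (2 * M + 1) / r^2"
  have K: "0 < K" "K * r^2 = 2 * M + 1" using \<open>0 \<le> M\<close> assms(2) by (auto simp: K_def)
  define w where "w x = v x + K * sqdist_to_line a e x" for x
  have "w p < w x" if x: "x \<in> cylinder a e L r"
    and face: "(x - a) \<bullet> e = 0 \<or> (x - a) \<bullet> e = L \<or> sqdist_to_line a e x = r^2" for x
  proof -
    have "0 \<le> K * sqdist_to_line a e x"
      using K sqdist_to_line_eq_dist_foot[OF assms(1), of a x] by simp
    then show ?thesis using face caps[OF x] M[OF x] M[OF p(1)] K(2) p(2) unfolding w_def by auto
  qed
  moreover have "continuous_on (cylinder a e L r) w"
    unfolding w_def sqdist_to_line_def by (intro continuous_intros assms(3))
  ultimately obtain \<delta> x0 where "0 < \<delta>" "ball x0 \<delta> \<subseteq> cylinder a e L r" "\<And>x. x \<in> ball x0 \<delta> \<Longrightarrow> w x0 \<le> w x"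
    using cylinder_interior_local_min[of a e L r w p, OF _ p(1)] by metis
  then show ?thesis using that K(1) unfolding w_def by blast
qed

lemma thin_cylinder_in_open:
  fixes u :: "real^'n \<Rightarrow> real"
  assumes "open \<Omega>" "continuous_on \<Omega> u" "norm e = 1" "0 < L"
    and seg: "closed_segment a (a + L *\<^sub>R e) \<subseteq> \<Omega>" and "0 < \<eta>"
  obtains r where "0 < r" "cylinder a e L r \<subseteq> \<Omega>"
    "\<And>x. x \<in> cylinder a e L r \<Longrightarrow> (x - a) \<bullet> e = 0 \<Longrightarrow> \<bar>u x - u a\<bar> < \<eta>"
    "\<And>x. x \<in> cylinder a e L r \<Longrightarrow> (x - a) \<bullet> e = L \<Longrightarrow> \<bar>u x - u (a + L *\<^sub>R e)\<bar> < \<eta>"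
proof -
  obtain \<epsilon> where \<epsilon>: "0 < \<epsilon>" "(\<Union>q\<in>closed_segment a (a + L *\<^sub>R e). ball q \<epsilon>) \<subseteq> \<Omega>"
    using compact_subset_open_imp_ball_epsilon_subset[OF compact_segment assms(1) seg] by metis
  have "a \<in> \<Omega>" "a + L *\<^sub>R e \<in> \<Omega>" using seg by auto
  then obtain r1 r2 where r12: "0 < r1" "0 < r2"
    "\<And>x. x \<in> \<Omega> \<Longrightarrow> dist x a < r1 \<Longrightarrow> dist (u x) (u a) < \<eta>"
    "\<And>x. x \<in> \<Omega> \<Longrightarrow> dist x (a + L *\<^sub>R e) < r2 \<Longrightarrow> dist (u x) (u (a + L *\<^sub>R e)) < \<eta>"
    using assms(2,6) unfolding continuous_on_iff by metis
  define r where "r = min \<epsilon> (min r1 r2) / 2"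
  have r: "0 < r" "r < \<epsilon>" "r < r1" "r < r2" using \<epsilon> r12 unfolding r_def by auto
  have cyl_sub: "cylinder a e L r \<subseteq> \<Omega>" using cylinder_subset[OF assms(3,4) _ r(2) \<epsilon>(2)] r by simp
  have foot: "dist x (a + ((x - a) \<bullet> e) *\<^sub>R e) < min r1 r2" if "x \<in> cylinder a e L r" for x
    using dist_foot_le_radius[OF assms(3) _ that] r by (simp add: dist_commute)
  show ?thesis
  proof (rule that[OF r(1) cyl_sub])
    fix x assume x: "x \<in> cylinder a e L r"
    then have "x \<in> \<Omega>" using cyl_sub by blast
    show "(x - a) \<bullet> e = 0 \<Longrightarrow> \<bar>u x - u a\<bar> < \<eta>"
      and "(x - a) \<bullet> e = L \<Longrightarrow> \<bar>u x - u (a + L *\<^sub>R e)\<bar> < \<eta>"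
      using r12(3,4)[OF \<open>x \<in> \<Omega>\<close>] foot[OF x] by (simp_all add: dist_real_def)
  qed
qed

lemma concave_along_segment:
  fixes u :: "real^'n \<Rightarrow> real"
  assumes "open \<Omega>" and cont: "continuous_on \<Omega> u" and seg: "closed_segment a b \<subseteq> \<Omega>" and "a \<noteq> b"
    and no_touch: "\<And>x0 c s K. x0 \<in> \<Omega> \<Longrightarrow> 0 < K \<Longrightarrow>
      \<not> (\<exists>r>0. \<forall>x\<in>ball x0 r \<inter> \<Omega>.
              u x - ridge_test a (sgn (b - a)) c s K x \<ge> u x0 - ridge_test a (sgn (b - a)) c s K x0)"
    and t: "0 \<le> t" "t \<le> 1"
  shows "(1 - t) * u a + t * u b \<le> u ((1 - t) *\<^sub>R a + t *\<^sub>R b)"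
proof (rule ccontr)
  define e L where "e = sgn (b - a)" and "L = norm (b - a)"
  have L: "0 < L" and e: "norm e = 1" using \<open>a \<noteq> b\<close> by (auto simp: e_def L_def norm_sgn)
  have b: "b = a + L *\<^sub>R e" using L by (simp add: e_def L_def sgn_div_norm)
  define s where "s = (u b - u a) / L"
  define v where "v x = u x - (u a + s * ((x - a) \<bullet> e))" for x
  define p where "p = (1 - t) *\<^sub>R a + t *\<^sub>R b"
  have "e \<bullet> e = 1" using e by (simp add: dot_square_norm)
  then have p_axial: "(p - a) \<bullet> e = t * L" and p_line: "sqdist_to_line a e p = 0"
    unfolding sqdist_to_line_def p_def b by (simp_all add: algebra_simps power2_eq_square)
  have p_cyl: "p \<in> cylinder a e L r" for r
    using p_axial p_line t L unfolding cylinder_def by (simp add: mult_left_le_one_le)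
  assume "\<not> (1 - t) * u a + t * u b \<le> u ((1 - t) *\<^sub>R a + t *\<^sub>R b)"
  moreover have "v p = u p - ((1 - t) * u a + t * u b)"
    unfolding v_def p_axial s_def using L by (simp add: field_simps)
  ultimately have "v p < 0" unfolding p_def by simp
  obtain r where r: "0 < r" and cyl_sub: "cylinder a e L r \<subseteq> \<Omega>"
    and caps: "\<And>x. x \<in> cylinder a e L r \<Longrightarrow> (x - a) \<bullet> e = 0 \<Longrightarrow> \<bar>u x - u a\<bar> < - v p"
      "\<And>x. x \<in> cylinder a e L r \<Longrightarrow> (x - a) \<bullet> e = L \<Longrightarrow> \<bar>u x - u b\<bar> < - v p"
    using thin_cylinder_in_open[OF \<open>open \<Omega>\<close> cont e L, of a "- v p"] seg b \<open>v p < 0\<close> by auto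
  have "v p < v x" if x: "x \<in> cylinder a e L r" and "(x - a) \<bullet> e = 0 \<or> (x - a) \<bullet> e = L" for x
  proof -
    have "v x = u x - u a \<and> \<bar>u x - u a\<bar> < - v p \<or> v x = u x - u b \<and> \<bar>u x - u b\<bar> < - v p"
      using that(2) caps[OF x] L unfolding v_def[of x] s_def by auto
    then show ?thesis by linarith
  qed
  moreover have "continuous_on (cylinder a e L r) v"
    unfolding v_def by (intro continuous_intros continuous_on_subset[OF cont cyl_sub])
  ultimately obtain K \<delta> x0 where x0: "0 < K" "0 < \<delta>" "ball x0 \<delta> \<subseteq> cylinder a e L r"
    "\<And>x. x \<in> ball x0 \<delta> \<Longrightarrow> v x0 + K * sqdist_to_line a e x0 \<le> v x + K * sqdist_to_line a e x"
    using penalized_interior_min_in_cylinder[OF e r _ p_cyl p_line] by metis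
  have "x0 \<in> \<Omega>" using x0(2,3) cyl_sub centre_in_ball by blast
  moreover have "\<forall>x\<in>ball x0 \<delta> \<inter> \<Omega>. u x - ridge_test a e (u a) s K x \<ge> u x0 - ridge_test a e (u a) s K x0"
    using x0(4) unfolding v_def ridge_test_def by (auto simp: algebra_simps)
  ultimately show False using no_touch[of x0 K "u a" s] x0(1,2) unfolding e_def by blast
qed

lemma concave_on_if_no_ridge_touch_below:
  fixes u :: "real^'n \<Rightarrow> real"
  assumes "open \<Omega>" "convex \<Omega>" "continuous_on \<Omega> u"
    and no_touch: "\<And>a e c s K x0. norm e = 1 \<Longrightarrow> 0 < K \<Longrightarrow> x0 \<in> \<Omega> \<Longrightarrow>
      \<not> (\<exists>r>0. \<forall>x\<in>ball x0 r \<inter> \<Omega>. u x - ridge_test a e c s K x \<ge> u x0 - ridge_test a e c s K x0)"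
  shows "concave_on \<Omega> u"
proof -
  have segment_ineq: "(1 - t) * u a + t * u b \<le> u ((1 - t) *\<^sub>R a + t *\<^sub>R b)"
    if "a \<in> \<Omega>" "b \<in> \<Omega>" "0 \<le> t" "t \<le> 1" for a b t
  proof (cases "a = b")
    case True
    then show ?thesis by (simp add: algebra_simps)
  next
    case False
    then have "norm (sgn (b - a)) = 1" by (simp add: norm_sgn)
    then show ?thesis
      using concave_along_segment[OF assms(1,3) closed_segment_subset[OF that(1,2) assms(2)] False]
        no_touch that(3,4) by blast
  qed
  show ?thesis
    unfolding concave_on_iff
  proof (intro conjI assms(2) ballI allI impI)
    fix x y and s v :: real
    assume "x \<in> \<Omega>" "y \<in> \<Omega>" "0 \<le> s" "0 \<le> v" "s + v = 1"
    moreover have "s = 1 - v" using \<open>s + v = 1\<close> by simp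
    ultimately show "s * u x + v * u y \<le> u (s *\<^sub>R x + v *\<^sub>R y)"
      using segment_ineq[of x y v] by simp
  qed
qed

lemma concave_on_if_visc_super_lambda_max:
  fixes u :: "real^'n \<Rightarrow> real"
  assumes "open \<Omega>" "convex \<Omega>" "continuous_on \<Omega> u" "visc_super lambda_max \<mu> \<Omega> u"
    and "\<forall>x\<in>\<Omega>. 0 < \<mu> * u x"
  shows "concave_on \<Omega> u"
  using assms visc_super_lambda_max_no_ridge_touch_below
  by (intro concave_on_if_no_ridge_touch_below) blast+

lemma convex_on_if_visc_sub_lambda_min:
  fixes u :: "real^'n \<Rightarrow> real"
  assumes "open \<Omega>" "convex \<Omega>" "continuous_on \<Omega> u" "visc_sub lambda_min \<mu> \<Omega> u"
    and "\<forall>x\<in>\<Omega>. \<mu> * u x < 0"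
  shows "convex_on \<Omega> u"
  unfolding convex_on_iff_concave
proof (rule concave_on_if_no_ridge_touch_below)
  show "continuous_on \<Omega> (\<lambda>x. - u x)" using assms(3) by (intro continuous_intros)
  fix a e :: "real^'n" and c s K :: real and x0
  assume "norm e = 1" "x0 \<in> \<Omega>"
  then have "\<not> (\<exists>r>0. \<forall>x\<in>ball x0 r \<inter> \<Omega>.
      u x - ridge_test a e (- c) (- s) (- K) x \<le> u x0 - ridge_test a e (- c) (- s) (- K) x0)"
    using assms(4,5) by (intro visc_sub_lambda_min_no_ridge_touch_above) auto
  then show "\<not> (\<exists>r>0. \<forall>x\<in>ball x0 r \<inter> \<Omega>. - u x - ridge_test a e c s K x \<ge> - u x0 - ridge_test a e c s K x0)"
    unfolding ridge_test_uminus by (simp add: algebra_simps)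
qed (use assms in auto)

lemma ray_meets_frontier:
  fixes x0 x :: "'a::real_normed_vector"
  assumes "open \<Omega>" "bounded \<Omega>" "x \<in> \<Omega>" "x \<noteq> x0"
  obtains T where "1 < T" "x0 + T *\<^sub>R (x - x0) \<in> frontier \<Omega>"
proof -
  define R where "R = (\<lambda>t. x0 + t *\<^sub>R (x - x0)) ` {1..}"
  have "connected R" unfolding R_def
    by (intro connected_continuous_image continuous_intros) (simp add: is_interval_connected is_interval_ci)
  moreover have "x \<in> R \<inter> \<Omega>" unfolding R_def using assms(3) by (auto intro!: image_eqI[of _ _ 1])
  moreover have "R - \<Omega> \<noteq> {}"
  proof
    assume "R - \<Omega> = {}"
    then have "R \<subseteq> \<Omega>" by blast
    then have "bounded R" using assms(2) bounded_subset by blast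
    then obtain B where B: "\<And>t. 1 \<le> t \<Longrightarrow> norm (x0 + t *\<^sub>R (x - x0)) \<le> B"
      unfolding R_def bounded_iff by auto
    define t where "t = (\<bar>B\<bar> + norm x0 + 1) / norm (x - x0) + 1"
    have nx: "0 < norm (x - x0)" using assms(4) by simp
    then have "1 \<le> t" unfolding t_def by simp
    have "t * norm (x - x0) - norm x0 \<le> norm (x0 + t *\<^sub>R (x - x0))"
      using norm_triangle_ineq2[of "t *\<^sub>R (x - x0)" "- x0"] \<open>1 \<le> t\<close> by (simp add: add.commute)
    moreover have "t * norm (x - x0) = \<bar>B\<bar> + norm x0 + 1 + norm (x - x0)"
      unfolding t_def using nx by (simp add: field_simps)
    ultimately show False using B[OF \<open>1 \<le> t\<close>] nx by linarith
  qed
  ultimately obtain y where "y \<in> R" "y \<in> frontier \<Omega>" using connected_Int_frontier by blast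
  then obtain T where T: "1 \<le> T" "x0 + T *\<^sub>R (x - x0) \<in> frontier \<Omega>" unfolding R_def by auto
  moreover have "T \<noteq> 1"
    using T(2) assms(1,3) by (auto simp: frontier_def interior_open)
  ultimately show ?thesis using that[of T] by simp
qed

lemma concave_on_ray_lower_bound:
  fixes u :: "'a::real_vector \<Rightarrow> real"
  assumes "concave_on \<Omega> u" "\<forall>z\<in>\<Omega>. 0 \<le> u z" "x0 \<in> \<Omega>" "1 < T"
    and ray: "\<And>t. 1 < t \<Longrightarrow> t < T \<Longrightarrow> x0 + t *\<^sub>R (x - x0) \<in> \<Omega>"
  shows "(1 - 1/T) * u x0 \<le> u x"
proof -
  have "\<forall>\<^sub>F t in at_left T. (1 - 1/t) * u x0 \<le> u x"
    using eventually_at_left_real[OF \<open>1 < T\<close>]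
  proof eventually_elim
    case (elim t)
    define z where "z = x0 + t *\<^sub>R (x - x0)"
    have "z \<in> \<Omega>" using ray elim unfolding z_def by simp
    have "x = (1 - 1/t) *\<^sub>R x0 + (1/t) *\<^sub>R z" unfolding z_def using elim by (simp add: algebra_simps)
    then have "(1 - 1/t) * u x0 + (1/t) * u z \<le> u x"
      using concave_onD[OF assms(1), of "1/t" x0 z] elim assms(3) \<open>z \<in> \<Omega>\<close> by simp
    moreover have "0 \<le> (1/t) * u z" using assms(2) \<open>z \<in> \<Omega>\<close> elim by simp
    ultimately show ?case by linarith
  qed
  then show ?thesis
    by (intro tendsto_le[OF trivial_limit_at_left_real tendsto_const])
      (use \<open>1 < T\<close> in \<open>auto intro!: tendsto_eq_intros\<close>)
qed

lemma concave_infdist_frontier_bound: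
  fixes u :: "'a::euclidean_space \<Rightarrow> real"
  assumes "open \<Omega>" "bounded \<Omega>" "concave_on \<Omega> u" "\<forall>z\<in>\<Omega>. 0 \<le> u z" "x0 \<in> \<Omega>" "x \<in> \<Omega>"
  shows "u x0 * infdist x (frontier \<Omega>) \<le> diameter (closure \<Omega>) * u x"
proof -
  have diam: "dist x0 y \<le> diameter (closure \<Omega>)" if "y \<in> frontier \<Omega>" for y
    using that assms(5) closure_subset unfolding frontier_def
    by (intro diameter_bounded_bound bounded_closure assms(2)) auto
  show ?thesis
  proof (cases "x = x0")
    case True
    have "\<Omega> \<noteq> UNIV" using assms(2) not_bounded_UNIV by auto
    then obtain y where "y \<in> frontier \<Omega>" using frontier_not_empty assms(5) by blast
    then have "infdist x (frontier \<Omega>) \<le> diameter (closure \<Omega>)"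
      using infdist_le[of y "frontier \<Omega>" x] diam True by fastforce
    then show ?thesis using True assms(4,5) by (simp add: mult_left_mono mult.commute)
  next
    case False
    obtain T where T: "1 < T" and y: "x0 + T *\<^sub>R (x - x0) \<in> frontier \<Omega>"
      using ray_meets_frontier[OF assms(1,2,6) False] by blast
    define y where "y = x0 + T *\<^sub>R (x - x0)"
    have "convex \<Omega>" using assms(3) by (simp add: concave_on_iff)
    moreover have "y \<in> closure \<Omega>" using y unfolding y_def frontier_def by blast
    ultimately have seg: "open_segment x0 y \<subseteq> \<Omega>"
      using in_interior_closure_convex_segment assms(1,5) by (metis interior_open)
    have "x0 + t *\<^sub>R (x - x0) \<in> \<Omega>" if "1 < t" "t < T" for t
    proof -
      have "x0 + t *\<^sub>R (x - x0) = (1 - t/T) *\<^sub>R x0 + (t/T) *\<^sub>R y"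
        unfolding y_def using T by (simp add: algebra_simps)
      moreover have "0 < t/T" "t/T < 1" "x0 \<noteq> y" using that T False unfolding y_def by auto
      ultimately have "x0 + t *\<^sub>R (x - x0) \<in> open_segment x0 y" unfolding in_segment by blast
      then show ?thesis using seg by blast
    qed
    then have ux: "(1 - 1/T) * u x0 \<le> u x" by (rule concave_on_ray_lower_bound[OF assms(3,4,5) T])
    have "x - y = (1 - T) *\<^sub>R (x - x0)" unfolding y_def by (simp add: algebra_simps)
    then have "infdist x (frontier \<Omega>) \<le> (T - 1) * norm (x - x0)"
      using infdist_le[OF y, of x] T unfolding y_def by (simp add: dist_norm)
    then have "u x0 * infdist x (frontier \<Omega>) \<le> u x0 * ((T - 1) * norm (x - x0))"
      using assms(4,5) by (simp add: mult_left_mono)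
    also have "\<dots> = ((1 - 1/T) * u x0) * (T * norm (x - x0))"
      using T by (simp add: field_simps)
    also have "\<dots> \<le> u x * diameter (closure \<Omega>)"
    proof (rule mult_mono[OF ux])
      show "T * norm (x - x0) \<le> diameter (closure \<Omega>)"
        using diam[OF y] T unfolding dist_norm by simp
    qed (use T assms(4,5,6) in auto)
    finally show ?thesis by (simp add: mult.commute)
  qed
qed

lemma concave_ge_infdist_frontier:
  fixes u :: "'a::euclidean_space \<Rightarrow> real"
  assumes "open \<Omega>" "bounded \<Omega>" "concave_on \<Omega> u" "\<forall>z\<in>\<Omega>. 0 \<le> u z" "x0 \<in> \<Omega>" "u x0 = 1" "x \<in> \<Omega>"
  shows "infdist x (frontier \<Omega>) / (diameter (closure \<Omega>) + 1) \<le> u x"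
proof -
  have "infdist x (frontier \<Omega>) \<le> diameter (closure \<Omega>) * u x"
    using concave_infdist_frontier_bound[OF assms(1-5,7)] assms(6) by simp
  moreover have "0 \<le> diameter (closure \<Omega>)" by (intro diameter_ge_0 bounded_closure assms(2))
  moreover have "0 \<le> u x" using assms(4,7) by blast
  ultimately show ?thesis by (simp add: divide_le_eq algebra_simps)
qed

lemma abs_attains_Sup_in_open:
  fixes u :: "'a::heine_borel \<Rightarrow> real"
  assumes "open \<Omega>" "bounded \<Omega>" "\<Omega> \<noteq> {}" "continuous_on (closure \<Omega>) u"
    and "\<forall>x\<in>frontier \<Omega>. u x = 0" "(SUP x\<in>closure \<Omega>. \<bar>u x\<bar>) \<noteq> 0"
  obtains x0 where "x0 \<in> \<Omega>" "\<bar>u x0\<bar> = (SUP x\<in>closure \<Omega>. \<bar>u x\<bar>)"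
proof -
  have cont: "continuous_on (closure \<Omega>) (\<lambda>x. \<bar>u x\<bar>)" using assms(4) by (intro continuous_intros)
  obtain x0 where x0: "x0 \<in> closure \<Omega>" "\<And>y. y \<in> closure \<Omega> \<Longrightarrow> \<bar>u y\<bar> \<le> \<bar>u x0\<bar>"
    using continuous_attains_sup[OF compact_closure[THEN iffD2, OF assms(2)] _ cont] assms(3)
    by (metis closure_eq_empty)
  then have sup: "(SUP x\<in>closure \<Omega>. \<bar>u x\<bar>) = \<bar>u x0\<bar>" by (intro cSup_eq_maximum) auto
  then have "x0 \<notin> frontier \<Omega>" using assms(5,6) by auto
  then have "x0 \<in> \<Omega>" using x0(1) assms(1) by (auto simp: frontier_def interior_open)
  then show ?thesis using that sup by simp
qed

lemma strictly_convex_dom_imp_convex: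
  assumes "strictly_convex_dom \<Omega>"
  shows "convex \<Omega>"
  unfolding convex_contains_open_segment
proof (intro ballI)
  fix a b assume "a \<in> \<Omega>" "b \<in> \<Omega>"
  then show "open_segment a b \<subseteq> \<Omega>"
    using assms closure_subset unfolding strictly_convex_dom_def by (cases "a = b") auto
qed

theorem lemma3p3:
  fixes \<Omega> :: "(real^'n) set" and \<psi>1 \<phi>1 :: "real^'n \<Rightarrow> real" and \<mu>1 :: real
  assumes "open \<Omega>" and "connected \<Omega>" and "\<Omega> \<noteq> {}" and "bounded \<Omega>"
    and "strictly_convex_dom \<Omega>" and "interior_ball_condition \<Omega>"
    and "\<mu>1 > 0"
    and "continuous_on (closure \<Omega>) \<psi>1" and "\<forall>x\<in>\<Omega>. \<psi>1 x > 0"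
    and "\<forall>x\<in>frontier \<Omega>. \<psi>1 x = 0"
    and "visc_sol lambda_max \<mu>1 \<Omega> \<psi>1"
    and "continuous_on (closure \<Omega>) \<phi>1" and "\<forall>x\<in>\<Omega>. \<phi>1 x < 0"
    and "\<forall>x\<in>frontier \<Omega>. \<phi>1 x = 0"
    and "visc_sol lambda_min \<mu>1 \<Omega> \<phi>1"
    and "(SUP x\<in>closure \<Omega>. \<bar>\<psi>1 x\<bar>) = 1" and "(SUP x\<in>closure \<Omega>. \<bar>\<phi>1 x\<bar>) = 1"
  shows "\<exists>C>0. \<forall>x\<in>\<Omega>. \<psi>1 x \<ge> C * infdist x (frontier \<Omega>) \<and>
                       \<phi>1 x \<le> - C * infdist x (frontier \<Omega>)"
proof -
  have "convex \<Omega>" using assms(5) by (rule strictly_convex_dom_imp_convex)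
  have cont: "continuous_on \<Omega> \<psi>1" "continuous_on \<Omega> \<phi>1"
    using assms(8,12) closure_subset continuous_on_subset by blast+
  have "concave_on \<Omega> \<psi>1"
  proof (rule concave_on_if_visc_super_lambda_max[OF assms(1) \<open>convex \<Omega>\<close> cont(1)])
    show "visc_super lambda_max \<mu>1 \<Omega> \<psi>1" using assms(11) by (simp add: visc_sol_def)
    show "\<forall>x\<in>\<Omega>. 0 < \<mu>1 * \<psi>1 x" using assms(7,9) by simp
  qed
  have "concave_on \<Omega> (\<lambda>x. - \<phi>1 x)"
    unfolding convex_on_iff_concave[symmetric]
  proof (rule convex_on_if_visc_sub_lambda_min[OF assms(1) \<open>convex \<Omega>\<close> cont(2)])
    show "visc_sub lambda_min \<mu>1 \<Omega> \<phi>1" using assms(15) by (simp add: visc_sol_def)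
    show "\<forall>x\<in>\<Omega>. \<mu>1 * \<phi>1 x < 0" using assms(7,13) by (simp add: mult_pos_neg)
  qed
  obtain x0 where "x0 \<in> \<Omega>" "\<bar>\<psi>1 x0\<bar> = 1"
    using abs_attains_Sup_in_open[OF assms(1,4,3,8,10)] unfolding assms(16) by auto
  then have x0: "x0 \<in> \<Omega>" "\<psi>1 x0 = 1" using assms(9) by auto
  obtain z0 where "z0 \<in> \<Omega>" "\<bar>\<phi>1 z0\<bar> = 1"
    using abs_attains_Sup_in_open[OF assms(1,4,3,12,14)] unfolding assms(17) by auto
  then have z0: "z0 \<in> \<Omega>" "- \<phi>1 z0 = 1" using assms(13) by auto
  have "0 < diameter (closure \<Omega>) + 1"
    using diameter_ge_0[OF bounded_closure[OF assms(4)]] by linarith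
  then show ?thesis
    using concave_ge_infdist_frontier[OF assms(1,4) \<open>concave_on \<Omega> \<psi>1\<close> _ x0]
      concave_ge_infdist_frontier[OF assms(1,4) \<open>concave_on \<Omega> (\<lambda>x. - \<phi>1 x)\<close> _ z0] assms(9,13)
    by (intro exI[of _ "1 / (diameter (closure \<Omega>) + 1)"]) (auto simp: less_imp_le le_minus_iff)
qed

end
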